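(* Fix $D,\alpha,\theta>0$. There is a constant $C=C(D,\alpha,\theta)$ such that for every finite connected graph $G$ on $n$ vertices satisfying (bal), (mix), (esc) with parameters $D,\alpha,\theta$, with $n$ sufficiently large, the following holds. Let $Y,Z$ be two independent lazy random walks of length $r-1$ started from two independent $\pi$-distributed vertices. Then, viewing $Y,Z$ as their vertex sets, $$\mathbb E\left[\mathrm{Close}_r(Y,Z)\right]\le C q^4,\qquad q=r/\sqrt n.$$
   Context: For a finite connected graph $G=(V,E)$ with $n$ vertices, $d(v)$ is the degree of $v$, $\delta(G),\Delta(G)$ are the minimum and maximum degrees. The lazy random walk $(X_t)$ on $G$ at each step stays put with probability $1/2$ and otherwise moves along a uniformly chosen edge incident to the current vertex; $\Pr_\mu$ denotes its law with $X_0\sim\mu$. Write $\mathbf p^t(u,v)=\Pr_u(X_t=v)$ and $\pi(v)=d(v)/(2|E|)$. The uniform mixing time is $t_{\mathrm{mix}}(G)=\min\{t\ge0:\max_{u,v\in V}|\mathbf p^t(u,v)/\pi(v)-1|\le 1/2\}$, and the bubble sum is $\mathcal B(G)=\sum_{t=0}^{t_{\mathrm{mix}}(G)}(t+1)\sup_{v}\mathbf p^t(v,v)$. Assumptions with parameters $D,\alpha,\theta>0$: (bal) $\Delta(G)/\delta(G)\le D$; (mix) $t_{\mathrm{mix}}(G)\le n^{1/2-\alpha}$; (esc) $\mathcal B(G)\le\theta$. The run time is $r=n^{1/2-\alpha/3}$ (rounded to an integer). For nonempty $U\subseteq V$, $\tau_U=\min\{t\ge 0:X_t\in U\}$. The $r$-closeness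 of two vertex sets is $\mathrm{Close}_r(U_1,U_2)=\Pr_\pi(\tau_{U_1}<r\text{ and }\tau_{U_2}<r)$, where the probability is over a lazy random walk $X$ with $X_0\sim\pi$ independent of $U_1,U_2$. *)

theory Defs
  imports Complex_Main "HOL-Library.FuncSet"
begin

definition simple_graph :: "'a set \<Rightarrow> ('a \<Rightarrow> 'a \<Rightarrow> bool) \<Rightarrow> bool" where
  "simple_graph V E \<longleftrightarrow> finite V \<and> (\<forall>u v. E u v \<longrightarrow> u \<in> V \<and> v \<in> V) \<and>
     (\<forall>u v. E u v \<longrightarrow> E v u) \<and> (\<forall>u. \<not> E u u)"

definition connected_graph :: "'a set \<Rightarrow> ('a \<Rightarrow> 'a \<Rightarrow> bool) \<Rightarrow> bool" where
  "connected_graph V E \<longleftrightarrow> simple_graph V E \<and> V \<noteq> {} \<and> (\<forall>u\<in>V. \<forall>v\<in>V. E\<^sup>*\<^sup>* u v)"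

definition deg :: "'a set \<Rightarrow> ('a \<Rightarrow> 'a \<Rightarrow> bool) \<Rightarrow> 'a \<Rightarrow> nat" where
  "deg V E v = card {u\<in>V. E v u}"

definition min_deg :: "'a set \<Rightarrow> ('a \<Rightarrow> 'a \<Rightarrow> bool) \<Rightarrow> nat" where
  "min_deg V E = Min (deg V E ` V)"

definition max_deg :: "'a set \<Rightarrow> ('a \<Rightarrow> 'a \<Rightarrow> bool) \<Rightarrow> nat" where
  "max_deg V E = Max (deg V E ` V)"

text \<open>Stationary distribution \<pi>(v) = d(v)/(2|E|), where 2|E| = sum of degrees.\<close>
definition stat :: "'a set \<Rightarrow> ('a \<Rightarrow> 'a \<Rightarrow> bool) \<Rightarrow> 'a \<Rightarrow> real" where
  "stat V E v = real (deg V E v) / real (\<Sum>w\<in>V. deg V E w)"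

definition lazyP :: "'a set \<Rightarrow> ('a \<Rightarrow> 'a \<Rightarrow> bool) \<Rightarrow> 'a \<Rightarrow> 'a \<Rightarrow> real" where
  "lazyP V E u v = (if u = v then 1/2 else 0) + (if E u v then 1 / (2 * real (deg V E u)) else 0)"

fun ptrans :: "'a set \<Rightarrow> ('a \<Rightarrow> 'a \<Rightarrow> bool) \<Rightarrow> nat \<Rightarrow> 'a \<Rightarrow> 'a \<Rightarrow> real" where
  "ptrans V E 0 u v = (if u = v then 1 else 0)"
| "ptrans V E (Suc t) u v = (\<Sum>w\<in>V. ptrans V E t u w * lazyP V E w v)"

definition tmix :: "'a set \<Rightarrow> ('a \<Rightarrow> 'a \<Rightarrow> bool) \<Rightarrow> nat" where
  "tmix V E = (LEAST t. \<forall>u\<in>V. \<forall>v\<in>V. \<bar>ptrans V E t u v / stat V E v - 1\<bar> \<le> 1/2)"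

definition bubble :: "'a set \<Rightarrow> ('a \<Rightarrow> 'a \<Rightarrow> bool) \<Rightarrow> real" where
  "bubble V E = (\<Sum>t = 0..tmix V E. real (t + 1) * (SUP v\<in>V. ptrans V E t v v))"

text \<open>Probability that the lazy walk with X_0 ~ \<pi> has trajectory x(0),...,x(k-1)
  (k \<ge> 1 positions).\<close>
definition path_weight :: "'a set \<Rightarrow> ('a \<Rightarrow> 'a \<Rightarrow> bool) \<Rightarrow> nat \<Rightarrow> (nat \<Rightarrow> 'a) \<Rightarrow> real" where
  "path_weight V E k x = stat V E (x 0) * (\<Prod>i<k - 1. lazyP V E (x i) (x (Suc i)))"

text \<open>Close_r(U1,U2) = Pr_\<pi>(\<tau>_{U1} < r and \<tau>_{U2} < r); the event depends only on
  X_0,...,X_{r-1}, and \<tau>_U < r iff X_t \<in> U for some t < r.\<close>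
definition Close :: "'a set \<Rightarrow> ('a \<Rightarrow> 'a \<Rightarrow> bool) \<Rightarrow> nat \<Rightarrow> 'a set \<Rightarrow> 'a set \<Rightarrow> real" where
  "Close V E r U1 U2 = (\<Sum>x \<in> {..<r} \<rightarrow>\<^sub>E V. path_weight V E r x *
      (if (\<exists>t<r. x t \<in> U1) \<and> (\<exists>t<r. x t \<in> U2) then 1 else 0))"

definition run_time :: "real \<Rightarrow> nat \<Rightarrow> nat" where
  "run_time \<alpha> n = nat (round (real n powr (1/2 - \<alpha>/3)))"

text \<open>E[Close_r(Y,Z)] for independent lazy walks Y,Z of length r-1 (r positions)
  with \<pi>-distributed starting points, Y and Z viewed as their vertex sets.\<close>
definition expected_close :: "'a set \<Rightarrow> ('a \<Rightarrow> 'a \<Rightarrow> bool) \<Rightarrow> nat \<Rightarrow> real" where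
  "expected_close V E r = (\<Sum>y \<in> {..<r} \<rightarrow>\<^sub>E V. \<Sum>z \<in> {..<r} \<rightarrow>\<^sub>E V.
      path_weight V E r y * path_weight V E r z * Close V E r (y ` {..<r}) (z ` {..<r}))"

end

theory Submission
  imports Defs
begin

text \<open>Condition on the walk X of Close: the expectation over the independent walks Y and Z
  factorises, so E[Close(Y,Z)] = E_X[A(X)^2] with A(x) the probability that a stationary walk Y
  visits the trajectory x. Every marginal Y_i is stationary, hence the union bound over the
  r^2 coincidences x_s = Y_i gives A(x) \<le> r^2 max \<pi> \<le> r^2 D/n, and
  E[Close] \<le> D^2 (r/\<surd>n)^4.\<close>

lemma connected_graph_finite: "connected_graph V E \<Longrightarrow> finite V"
  by (simp add: connected_graph_def simple_graph_def)

lemma connected_graph_edge_in: "connected_graph V E \<Longrightarrow> E u v \<Longrightarrow> v \<in> V"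
  by (simp add: connected_graph_def simple_graph_def)

lemma connected_graph_sym: "connected_graph V E \<Longrightarrow> E u v \<Longrightarrow> E v u"
  by (simp add: connected_graph_def simple_graph_def)

lemma deg_pos:
  assumes cg: "connected_graph V E" and two: "2 \<le> card V" and v: "v \<in> V"
  shows "deg V E v > 0"
proof -
  have fin: "finite V" using connected_graph_finite[OF cg] .
  have "card (V - {v}) \<ge> 1" using two v fin by (simp add: card_Diff_singleton)
  then obtain u where u: "u \<in> V" "u \<noteq> v"
    by (metis Diff_iff card.empty empty_iff not_one_le_zero singletonI subsetI subset_empty)
  have "E\<^sup>*\<^sup>* v u" using cg u v by (simp add: connected_graph_def)
  then obtain w where "E v w" using u(2) by (metis converse_rtranclpE)
  then have "w \<in> {u\<in>V. E v u}" using connected_graph_edge_in[OF cg] by auto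
  then show ?thesis unfolding deg_def using fin by (auto simp: card_gt_0_iff)
qed

lemma sum_lazyP_eq_1:
  assumes cg: "connected_graph V E" and two: "2 \<le> card V" and u: "u \<in> V"
  shows "(\<Sum>v\<in>V. lazyP V E u v) = 1"
proof -
  have fin: "finite V" using connected_graph_finite[OF cg] .
  have "(\<Sum>v\<in>V. lazyP V E u v) = 1/2 + (\<Sum>v\<in>V. if E u v then 1 / (2 * real (deg V E u)) else 0)"
    unfolding lazyP_def using fin u by (simp add: sum.distrib)
  also have "\<dots> = 1/2 + (\<Sum>v\<in>{v\<in>V. E u v}. 1 / (2 * real (deg V E u)))"
    using fin by (simp add: sum.inter_filter[symmetric])
  also have "\<dots> = 1/2 + real (deg V E u) / (2 * real (deg V E u))"
    by (simp add: deg_def)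
  finally show ?thesis using deg_pos[OF cg two u] by simp
qed

lemma stat_nonneg: "stat V E v \<ge> 0"
  by (auto simp: stat_def intro!: divide_nonneg_nonneg sum_nonneg)

lemma sum_deg_pos:
  assumes cg: "connected_graph V E" and two: "2 \<le> card V"
  shows "real (\<Sum>w\<in>V. deg V E w) > 0"
proof -
  obtain v where v: "v \<in> V" using two by fastforce
  have "deg V E v \<le> (\<Sum>w\<in>V. deg V E w)"
    by (rule member_le_sum[OF v _ connected_graph_finite[OF cg]]) simp
  then show ?thesis using deg_pos[OF cg two v] by linarith
qed

lemma sum_stat_eq_1:
  assumes cg: "connected_graph V E" and two: "2 \<le> card V"
  shows "(\<Sum>w\<in>V. stat V E w) = 1"
  using sum_deg_pos[OF cg two] unfolding stat_def by (simp add: sum_divide_distrib[symmetric])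

text \<open>Detailed balance d(w) P(w,v) = 1/2 on edges is what makes \<pi> stationary.\<close>
lemma stat_stationary:
  assumes cg: "connected_graph V E" and two: "2 \<le> card V" and v: "v \<in> V"
  shows "(\<Sum>w\<in>V. stat V E w * lazyP V E w v) = stat V E v"
proof -
  have fin: "finite V" using connected_graph_finite[OF cg] .
  have edge_term: "real (deg V E w) * (if E w v then 1 / (2 * real (deg V E w)) else 0) =
      (if E v w then 1/2 else 0)" if "w \<in> V" for w
    using deg_pos[OF cg two that] connected_graph_sym[OF cg] by auto
  have "(\<Sum>w\<in>V. real (deg V E w) * lazyP V E w v) =
     (\<Sum>w\<in>V. if w = v then real (deg V E w) / 2 else 0) + (\<Sum>w\<in>V. if E v w then 1/2 else 0)"
    unfolding lazyP_def distrib_left sum.distrib[symmetric]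
    by (intro sum.cong[OF refl]) (simp add: edge_term)
  also have "\<dots> = real (deg V E v) / 2 + (\<Sum>w\<in>{w\<in>V. E v w}. 1/2)"
    using fin v by (simp add: sum.inter_filter[symmetric])
  finally have "(\<Sum>w\<in>V. real (deg V E w) * lazyP V E w v) = real (deg V E v)"
    by (simp add: deg_def)
  then show ?thesis unfolding stat_def by (simp add: sum_divide_distrib[symmetric])
qed

lemma sum_PiE_lessThan_Suc:
  "(\<Sum>x\<in>{..<Suc k} \<rightarrow>\<^sub>E V. F x) = (\<Sum>x\<in>{..<k} \<rightarrow>\<^sub>E V. \<Sum>v\<in>V. F (x(k:=v)))"
proof -
  have ins: "{..<Suc k} = insert k {..<k}" by auto
  have "(\<Sum>x\<in>{..<Suc k} \<rightarrow>\<^sub>E V. F x) = (\<Sum>(v, x)\<in>V \<times> ({..<k} \<rightarrow>\<^sub>E V). F (x(k := v)))"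
    unfolding ins PiE_insert_eq
    using inj_combinator[of k "{..<k}" "\<lambda>_. V"] by (simp add: sum.reindex split_def)
  also have "\<dots> = (\<Sum>v\<in>V. \<Sum>x\<in>{..<k} \<rightarrow>\<^sub>E V. F (x(k:=v)))"
    by (simp add: sum.cartesian_product split_def)
  also have "\<dots> = (\<Sum>x\<in>{..<k} \<rightarrow>\<^sub>E V. \<Sum>v\<in>V. F (x(k:=v)))"
    by (rule sum.swap)
  finally show ?thesis .
qed

lemma path_weight_nonneg: "path_weight V E k x \<ge> 0"
  unfolding path_weight_def
  by (intro mult_nonneg_nonneg stat_nonneg prod_nonneg) (auto simp: lazyP_def)

lemma path_weight_fun_upd:
  assumes "k \<ge> 1"
  shows "path_weight V E (Suc k) (x(k:=v)) = path_weight V E k x * lazyP V E (x (k-1)) v"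
proof -
  obtain m where m: "k = Suc m" using assms by (cases k) auto
  have "(\<Prod>i<m. lazyP V E ((x(k:=v)) i) ((x(k:=v)) (Suc i))) = (\<Prod>i<m. lazyP V E (x i) (x (Suc i)))"
    by (rule prod.cong) (auto simp: m)
  then show ?thesis unfolding path_weight_def m by simp
qed

lemma sum_path_weight_Suc:
  assumes "k \<ge> 1"
  shows "(\<Sum>x\<in>{..<Suc k} \<rightarrow>\<^sub>E V. path_weight V E (Suc k) x * F x) =
    (\<Sum>x\<in>{..<k} \<rightarrow>\<^sub>E V. path_weight V E k x * (\<Sum>v\<in>V. lazyP V E (x (k-1)) v * F (x(k:=v))))"
  unfolding sum_PiE_lessThan_Suc
  using assms by (simp add: path_weight_fun_upd sum_distrib_left mult_ac)

lemma sum_path_weight_last: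
  assumes cg: "connected_graph V E" and two: "2 \<le> card V" and k: "k \<ge> 1"
  shows "(\<Sum>x\<in>{..<k} \<rightarrow>\<^sub>E V. path_weight V E k x * h (x (k-1))) = (\<Sum>w\<in>V. stat V E w * h w)"
  using k
proof (induction k arbitrary: h rule: dec_induct)
  case base
  show ?case by (simp add: sum_PiE_lessThan_Suc[where k=0, simplified] path_weight_def)
next
  case (step k)
  have "(\<Sum>x\<in>{..<Suc k} \<rightarrow>\<^sub>E V. path_weight V E (Suc k) x * h (x (Suc k - 1))) =
      (\<Sum>x\<in>{..<k} \<rightarrow>\<^sub>E V. path_weight V E k x * (\<Sum>v\<in>V. lazyP V E (x (k-1)) v * h v))"
    using sum_path_weight_Suc[OF step.hyps(1), of V E "\<lambda>x. h (x k)"] by simp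
  also have "\<dots> = (\<Sum>w\<in>V. stat V E w * (\<Sum>v\<in>V. lazyP V E w v * h v))"
    by (rule step.IH)
  also have "\<dots> = (\<Sum>w\<in>V. \<Sum>v\<in>V. stat V E w * lazyP V E w v * h v)"
    by (simp add: sum_distrib_left mult.assoc)
  also have "\<dots> = (\<Sum>v\<in>V. \<Sum>w\<in>V. stat V E w * lazyP V E w v * h v)"
    by (rule sum.swap)
  also have "\<dots> = (\<Sum>v\<in>V. (\<Sum>w\<in>V. stat V E w * lazyP V E w v) * h v)"
    by (simp add: sum_distrib_right)
  also have "\<dots> = (\<Sum>v\<in>V. stat V E v * h v)"
    using stat_stationary[OF cg two] by simp
  finally show ?case .
qed

lemma sum_path_weight_marginal:
  assumes cg: "connected_graph V E" and two: "2 \<le> card V" and i: "i < k"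
  shows "(\<Sum>x\<in>{..<k} \<rightarrow>\<^sub>E V. path_weight V E k x * h (x i)) = (\<Sum>w\<in>V. stat V E w * h w)"
proof -
  have "Suc i \<le> k" using i by simp
  then show ?thesis
  proof (induction k rule: dec_induct)
    case base
    show ?case using sum_path_weight_last[OF cg two, of "Suc i" h] by simp
  next
    case (step k)
    have k: "k \<ge> 1" "i \<noteq> k" using step.hyps by auto
    have "(\<Sum>x\<in>{..<Suc k} \<rightarrow>\<^sub>E V. path_weight V E (Suc k) x * h (x i)) =
        (\<Sum>x\<in>{..<k} \<rightarrow>\<^sub>E V. path_weight V E k x * (\<Sum>v\<in>V. lazyP V E (x (k-1)) v * h (x i)))"
      using sum_path_weight_Suc[OF k(1), of V E "\<lambda>x. h (x i)"] k(2) by simp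
    also have "\<dots> = (\<Sum>x\<in>{..<k} \<rightarrow>\<^sub>E V. path_weight V E k x * h (x i))"
    proof (rule sum.cong[OF refl])
      fix x assume "x \<in> {..<k} \<rightarrow>\<^sub>E V"
      moreover have "k - 1 \<in> {..<k}" using k(1) by simp
      ultimately have "x (k-1) \<in> V" by (rule PiE_mem)
      then show "path_weight V E k x * (\<Sum>v\<in>V. lazyP V E (x (k-1)) v * h (x i)) =
          path_weight V E k x * h (x i)"
        by (simp only: sum_distrib_right[symmetric] sum_lazyP_eq_1[OF cg two] mult_1_left)
    qed
    finally show ?case using step.IH by simp
  qed
qed

lemma sum_path_weight_eq_1:
  assumes cg: "connected_graph V E" and two: "2 \<le> card V" and r: "r \<ge> 1"
  shows "(\<Sum>x\<in>{..<r} \<rightarrow>\<^sub>E V. path_weight V E r x) = 1"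
  using sum_path_weight_marginal[OF cg two, of 0 r "\<lambda>_. 1"] r sum_stat_eq_1[OF cg two] by simp

lemma stat_le_balance:
  assumes cg: "connected_graph V E" and two: "2 \<le> card V"
    and D: "real (max_deg V E) / real (min_deg V E) \<le> D" and v: "v \<in> V"
  shows "stat V E v \<le> D / real (card V)"
proof -
  have fin: "finite V" using connected_graph_finite[OF cg] .
  have ne: "V \<noteq> {}" using two by auto
  have "Min (deg V E ` V) \<in> deg V E ` V" using fin ne by simp
  then obtain w where w: "w \<in> V" "min_deg V E = deg V E w" unfolding min_deg_def by blast
  have min_pos: "real (min_deg V E) > 0" using w deg_pos[OF cg two w(1)] by simp
  have "deg V E v \<le> max_deg V E" unfolding max_deg_def using fin v by simp
  moreover have "real (max_deg V E) \<le> D * real (min_deg V E)"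
    using D min_pos by (simp add: divide_le_eq)
  ultimately have deg_v: "real (deg V E v) \<le> D * real (min_deg V E)" by linarith
  have "(\<Sum>w\<in>V. min_deg V E) \<le> (\<Sum>w\<in>V. deg V E w)"
    by (rule sum_mono) (simp add: min_deg_def fin)
  then have "card V * min_deg V E \<le> (\<Sum>w\<in>V. deg V E w)" by simp
  then have sum_ge: "real (card V) * real (min_deg V E) \<le> real (\<Sum>w\<in>V. deg V E w)"
    by (metis of_nat_le_iff of_nat_mult)
  have "stat V E v \<le> (D * real (min_deg V E)) / (real (card V) * real (min_deg V E))"
    unfolding stat_def
  proof (rule frac_le)
    show "0 \<le> D * real (min_deg V E)" using deg_v by (meson of_nat_0_le_iff order_trans)
    show "0 < real (card V) * real (min_deg V E)" using two min_pos by simp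
  qed (fact deg_v sum_ge)+
  also have "\<dots> = D / real (card V)" using min_pos by simp
  finally show ?thesis .
qed

definition meets :: "nat \<Rightarrow> (nat \<Rightarrow> 'a) \<Rightarrow> (nat \<Rightarrow> 'a) \<Rightarrow> real" where
  "meets r x y = (if \<exists>t<r. x t \<in> y ` {..<r} then 1 else 0)"

lemma meets_nonneg: "meets r x y \<ge> 0"
  by (simp add: meets_def)

lemma meets_le_coincidences: "meets r x y \<le> (\<Sum>s<r. \<Sum>i<r. if x s = y i then 1 else 0)"
proof (cases "\<exists>t<r. x t \<in> y ` {..<r}")
  case True
  then obtain s i where si: "s < r" "i < r" "x s = y i" by auto
  have "(1::real) \<le> (\<Sum>i<r. if x s = y i then 1 else 0)"
    using member_le_sum[of i "{..<r}" "\<lambda>i. if x s = y i then (1::real) else 0"] si by simp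
  also have "\<dots> \<le> (\<Sum>s<r. \<Sum>i<r. if x s = y i then 1 else 0)"
    using member_le_sum[of s "{..<r}" "\<lambda>s. \<Sum>i<r. if x s = y i then (1::real) else 0"] si
    by (simp add: sum_nonneg)
  finally show ?thesis using True by (simp add: meets_def)
next
  case False
  then show ?thesis unfolding meets_def by (simp only: if_False) (intro sum_nonneg, simp)
qed

lemma sum_path_weight_meets_le:
  assumes cg: "connected_graph V E" and two: "2 \<le> card V"
    and M: "\<And>v. v \<in> V \<Longrightarrow> stat V E v \<le> M" and x: "x \<in> {..<r} \<rightarrow>\<^sub>E V"
  shows "(\<Sum>y\<in>{..<r} \<rightarrow>\<^sub>E V. path_weight V E r y * meets r x y) \<le> real r * real r * M"
proof -
  let ?P = "{..<r} \<rightarrow>\<^sub>E V"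
  have coincidence: "(\<Sum>y\<in>?P. path_weight V E r y * (if x s = y i then 1 else 0)) = stat V E (x s)"
    if s: "s < r" and i: "i < r" for s i
  proof -
    have "x s \<in> V" using x s by auto
    then show ?thesis
      using sum_path_weight_marginal[OF cg two i, of "\<lambda>w. if x s = w then 1 else 0"]
        connected_graph_finite[OF cg]
      by (simp add: if_distrib cong: if_cong)
  qed
  have "(\<Sum>y\<in>?P. path_weight V E r y * meets r x y) \<le>
     (\<Sum>y\<in>?P. path_weight V E r y * (\<Sum>s<r. \<Sum>i<r. if x s = y i then 1 else 0))"
    by (intro sum_mono mult_left_mono meets_le_coincidences path_weight_nonneg)
  also have "\<dots> = (\<Sum>y\<in>?P. \<Sum>s<r. \<Sum>i<r. path_weight V E r y * (if x s = y i then 1 else 0))"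
    by (simp add: sum_distrib_left)
  also have "\<dots> = (\<Sum>s<r. \<Sum>y\<in>?P. \<Sum>i<r. path_weight V E r y * (if x s = y i then 1 else 0))"
    by (rule sum.swap)
  also have "\<dots> = (\<Sum>s<r. \<Sum>i<r. \<Sum>y\<in>?P. path_weight V E r y * (if x s = y i then 1 else 0))"
    by (rule sum.cong[OF refl], rule sum.swap)
  also have "\<dots> = (\<Sum>s<r. \<Sum>i<r. stat V E (x s))"
    by (simp add: coincidence)
  also have "\<dots> \<le> (\<Sum>s<r. \<Sum>i<r. M)"
    using x by (intro sum_mono M) auto
  finally show ?thesis by simp
qed

lemma expected_close_eq_sum_square:
  "expected_close V E r = (\<Sum>x\<in>{..<r} \<rightarrow>\<^sub>E V. path_weight V E r x *
      (\<Sum>y\<in>{..<r} \<rightarrow>\<^sub>E V. path_weight V E r y * meets r x y)\<^sup>2)"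
proof -
  let ?P = "{..<r} \<rightarrow>\<^sub>E V"
  let ?W = "path_weight V E r"
  have close: "Close V E r (y ` {..<r}) (z ` {..<r}) = (\<Sum>x\<in>?P. ?W x * (meets r x y * meets r x z))"
    for y z unfolding Close_def meets_def by (intro sum.cong[OF refl]) auto
  have "expected_close V E r = (\<Sum>y\<in>?P. \<Sum>z\<in>?P. \<Sum>x\<in>?P. ?W x * ((?W y * meets r x y) * (?W z * meets r x z)))"
    unfolding expected_close_def close by (simp add: sum_distrib_left mult_ac)
  also have "\<dots> = (\<Sum>y\<in>?P. \<Sum>x\<in>?P. \<Sum>z\<in>?P. ?W x * ((?W y * meets r x y) * (?W z * meets r x z)))"
    by (rule sum.cong[OF refl], rule sum.swap)
  also have "\<dots> = (\<Sum>x\<in>?P. \<Sum>y\<in>?P. \<Sum>z\<in>?P. ?W x * ((?W y * meets r x y) * (?W z * meets r x z)))"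
    by (rule sum.swap)
  also have "\<dots> = (\<Sum>x\<in>?P. ?W x * (\<Sum>y\<in>?P. ?W y * meets r x y)\<^sup>2)"
  proof (rule sum.cong[OF refl])
    fix x
    have "(\<Sum>y\<in>?P. ?W y * meets r x y)\<^sup>2 =
        (\<Sum>y\<in>?P. \<Sum>z\<in>?P. (?W y * meets r x y) * (?W z * meets r x z))"
      by (simp add: power2_eq_square sum_product)
    then show "(\<Sum>y\<in>?P. \<Sum>z\<in>?P. ?W x * ((?W y * meets r x y) * (?W z * meets r x z))) =
        ?W x * (\<Sum>y\<in>?P. ?W y * meets r x y)\<^sup>2"
      by (simp add: sum_distrib_left)
  qed
  finally show ?thesis .
qed

lemma expected_close_le_balance:
  assumes cg: "connected_graph V E" and two: "2 \<le> card V"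
    and D: "real (max_deg V E) / real (min_deg V E) \<le> D"
  shows "expected_close V E r \<le> D^2 * (real r / sqrt (real (card V))) ^ 4"
proof -
  let ?P = "{..<r} \<rightarrow>\<^sub>E V"
  let ?W = "path_weight V E r"
  define K where "K = real r * real r * (D / real (card V))"
  define A where "A x = (\<Sum>y\<in>?P. ?W y * meets r x y)" for x
  have A_nonneg: "A x \<ge> 0" for x
    unfolding A_def by (intro sum_nonneg mult_nonneg_nonneg path_weight_nonneg meets_nonneg)
  have A_le: "A x \<le> K" if "x \<in> ?P" for x
    unfolding A_def K_def using that
    by (intro sum_path_weight_meets_le[OF cg two] stat_le_balance[OF cg two D])
  have "expected_close V E r = (\<Sum>x\<in>?P. ?W x * (A x)\<^sup>2)"
    unfolding expected_close_eq_sum_square A_def ..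
  also have "\<dots> \<le> (\<Sum>x\<in>?P. ?W x * K\<^sup>2)"
    using A_nonneg A_le by (intro sum_mono mult_left_mono power_mono path_weight_nonneg) auto
  also have "\<dots> = K\<^sup>2 * (\<Sum>x\<in>?P. ?W x)"
    by (simp add: sum_distrib_left mult_ac)
  also have "\<dots> = K\<^sup>2"
    using sum_path_weight_eq_1[OF cg two, of r] by (cases "r = 0") (auto simp: K_def)
  also have "\<dots> = D^2 * (real r / sqrt (real (card V))) ^ 4"
  proof -
    have n: "real (card V) > 0" using two by simp
    have "sqrt (real (card V)) ^ 4 = real (card V) ^ 2"
      using n by (metis numeral_Bit0 power_add power2_eq_square real_sqrt_pow2 less_imp_le)
    then show ?thesis
      unfolding K_def using n by (simp add: power_divide field_simps power2_eq_square eval_nat_numeral)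
  qed
  finally show ?thesis .
qed

theorem mainTheorem8:
  fixes D \<alpha> \<theta> :: real
  assumes "D > 0" and "\<alpha> > 0" and "\<theta> > 0"
  shows "\<exists>C::real. \<exists>N::nat. \<forall>(V::nat set) E.
    connected_graph V E \<and> card V \<ge> N \<and>
    real (max_deg V E) / real (min_deg V E) \<le> D \<and>
    real (tmix V E) \<le> real (card V) powr (1/2 - \<alpha>) \<and>
    bubble V E \<le> \<theta> \<longrightarrow>
    expected_close V E (run_time \<alpha> (card V))
      \<le> C * (real (run_time \<alpha> (card V)) / sqrt (real (card V))) ^ 4"
  \<comment> \<open>N = 2 excludes the one-vertex graph, where deg = 0 makes lazyP sub-stochastic.\<close>
  using expected_close_le_balance by (intro exI[of _ "D^2"] exI[of _ 2]) blast

end
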